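(* Let $n\ge 2$, let $p \in B_n$, and let $C = C_{B_{n+1}}\big(d(p)\, \sigma_1\, \delta_{n+1}^{-1}\big)$ be the centralizer of $d(p)\sigma_1\delta_{n+1}^{-1}$ in $B_{n+1}$. Define $$c_1 = \Delta_{n+1}^2,\qquad c_2 = d(p)\, \sigma_2^{-1} \cdots \sigma_n^{-1},\qquad c_3 = \sigma_1 \sigma_2\cdots \sigma_{n-1}\sigma_n^2 \sigma_{n-1}\cdots \sigma_{1}.$$ Then $c_1,c_2,c_3 \in C$, and the subgroup $C' = \langle c_1,c_2,c_3\rangle$ of $B_{n+1}$ is abelian and hence has polynomial growth.
   Context: $B_m$ denotes the braid group on $m$ strands with Artin generators $\sigma_1,\dots,\sigma_{m-1}$ and relations $\sigma_i\sigma_j\sigma_i=\sigma_j\sigma_i\sigma_j$ for $|i-j|=1$, $\sigma_i\sigma_j=\sigma_j\sigma_i$ for $|i-j|>1$; $B_\infty$ is the braid group on generators $\sigma_1,\sigma_2,\dots$ with the same relations, and $B_m\subset B_{m+1}\subset B_\infty$ via the generators. The shift $d$ is the monomorphism of $B_\infty$ induced by $\sigma_{i_1}^{\varepsilon_1}\cdots\sigma_{i_k}^{\varepsilon_k}\mapsto \sigma_{i_1+1}^{\varepsilon_1}\cdots\sigma_{i_k+1}^{\varepsilon_k}$. In $B_{n+1}$: $\delta_{n+1} = \sigma_{n}\sigma_{n-1}\cdots\sigma_1$ and $\Delta_{n+1} = (\sigma_{n}\cdots\sigma_1)(\sigma_{n}\cdots\sigma_2)\cdots(\sigma_{n})$.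 *)

theory Defs
  imports "HOL-Algebra.Algebra"
begin

text \<open>Braid words: a letter (i, True) stands for sigma_i, (i, False) for sigma_i inverse.
  Only indices i >= 1 are used for braid elements.\<close>
type_synonym bword = "(nat \<times> bool) list"

inductive beq :: "bword \<Rightarrow> bword \<Rightarrow> bool" where
  beq_refl: "beq w w"
| beq_sym: "beq u v \<Longrightarrow> beq v u"
| beq_trans: "beq u v \<Longrightarrow> beq v w \<Longrightarrow> beq u w"
| beq_ctx: "beq u v \<Longrightarrow> beq (a @ u @ b) (a @ v @ b)"
| beq_cancel: "beq [(i, e), (i, \<not> e)] []"
| beq_braid: "Suc i = j \<or> Suc j = i \<Longrightarrow>
     beq [(i, True), (j, True), (i, True)] [(j, True), (i, True), (j, True)]"
| beq_far: "Suc i < j \<or> Suc j < i \<Longrightarrow> beq [(i, True), (j, True)] [(j, True), (i, True)]"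

definition brel :: "(bword \<times> bword) set" where
  "brel = {(u, v). beq u v}"

definition bclass :: "bword \<Rightarrow> bword set" where
  "bclass w = brel `` {w}"

definition bmult :: "bword set \<Rightarrow> bword set \<Rightarrow> bword set" where
  "bmult A1 A2 = bclass ((SOME u. u \<in> A1) @ (SOME v. v \<in> A2))"

definition B_inf :: "bword set monoid" where
  "B_inf = \<lparr> carrier = {bclass w | w. \<forall>x\<in>set w. 1 \<le> fst x},
             monoid.mult = bmult, one = bclass [] \<rparr>"

definition braid_group :: "nat \<Rightarrow> bword set monoid" where
  "braid_group m = B_inf\<lparr> carrier := {bclass w | w. \<forall>x\<in>set w. 1 \<le> fst x \<and> fst x < m} \<rparr>"

definition shift :: "bword set \<Rightarrow> bword set" where
  "shift A = bclass (map (\<lambda>(i, e). (Suc i, e)) (SOME w. w \<in> A))"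

definition sigma :: "nat \<Rightarrow> bword set" where
  "sigma i = bclass [(i, True)]"

definition delta :: "nat \<Rightarrow> bword set" where
  "delta m = bclass (map (\<lambda>i. (i, True)) (rev [1..<m]))"

definition Delta :: "nat \<Rightarrow> bword set" where
  "Delta m = bclass (concat (map (\<lambda>k. map (\<lambda>i. (i, True)) (rev [k..<m])) [1..<m]))"

definition centralizer :: "('a, 'b) monoid_scheme \<Rightarrow> 'a \<Rightarrow> 'a set" where
  "centralizer G x = {g \<in> carrier G. g \<otimes>\<^bsub>G\<^esub> x = x \<otimes>\<^bsub>G\<^esub> g}"

definition word_ball :: "('a, 'b) monoid_scheme \<Rightarrow> 'a set \<Rightarrow> nat \<Rightarrow> 'a set" where
  "word_ball G S r = {foldr (\<otimes>\<^bsub>G\<^esub>) xs \<one>\<^bsub>G\<^esub> | xs.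
      length xs \<le> r \<and> set xs \<subseteq> S \<union> (\<lambda>s. inv\<^bsub>G\<^esub> s) ` S}"

definition polynomial_growth :: "('a, 'b) monoid_scheme \<Rightarrow> 'a set \<Rightarrow> bool" where
  "polynomial_growth G S \<longleftrightarrow>
     (\<exists>K d. \<forall>r\<ge>1. finite (word_ball G S r) \<and> real (card (word_ball G S r)) \<le> K * real r ^ d)"

end

theory Submission
  imports Defs
begin

text \<open>Since sigma_1 delta_(n+1)^-1 = sigma_2^-1 ... sigma_n^-1, the element whose centralizer
  is C is c_2 itself, a word in sigma_2, ..., sigma_n. Conjugation by Delta_(n+1) maps sigma_i
  to sigma_(n+1-i), so c_1 = Delta_(n+1)^2 is central in B_(n+1). Conjugation by delta_(n+1)
  maps sigma_i to sigma_(i-1) for 2 <= i <= n, and conjugation by the reversed word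
  sigma_1 ... sigma_n undoes this shift; hence c_3 = (sigma_1 ... sigma_n)(sigma_n ... sigma_1)
  commutes with sigma_2, ..., sigma_n and thus with c_2. Pairwise commuting generators generate
  an abelian group, and there the ball of radius r for k generators consists of products of
  powers with exponents in [-r, r], so it has at most (2r + 1)^k elements.\<close>

lemma (in group) subgroup_centralizer:
  assumes "x \<in> carrier G"
  shows "subgroup (centralizer G x) G"
proof (rule subgroupI)
  fix g
  assume "g \<in> centralizer G x"
  then have g: "g \<in> carrier G" and gx: "g \<otimes> x = x \<otimes> g"
    by (auto simp: centralizer_def)
  have "inv g \<otimes> x = inv g \<otimes> (x \<otimes> g) \<otimes> inv g"
    using g assms by (simp add: m_assoc)
  also have "\<dots> = inv g \<otimes> (g \<otimes> x) \<otimes> inv g"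
    by (simp add: gx)
  also have "\<dots> = x \<otimes> inv g"
    using g assms by (simp add: m_assoc[symmetric])
  finally show "inv g \<in> centralizer G x"
    using g by (simp add: centralizer_def)
next
  fix g h
  assume "g \<in> centralizer G x" "h \<in> centralizer G x"
  then show "g \<otimes> h \<in> centralizer G x"
    using assms by (auto simp: centralizer_def m_assoc) (metis m_assoc)
qed (use assms in \<open>auto simp: centralizer_def\<close>)

lemma (in group) comm_group_subgroup_generated:
  assumes S: "S \<subseteq> carrier G" and comm: "\<And>a b. a \<in> S \<Longrightarrow> b \<in> S \<Longrightarrow> a \<otimes> b = b \<otimes> a"
  shows "comm_group (subgroup_generated G S)"
proof (rule group.group_comm_groupI)
  have gen_carrier: "generate G S \<subseteq> carrier G"
    using S generate_in_carrier by blast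
  have gen_comm_S: "generate G S \<subseteq> centralizer G b" if "b \<in> S" for b
    using that S comm by (intro generate_subgroup_incl subgroup_centralizer) (auto simp: centralizer_def)
  have gen_comm: "generate G S \<subseteq> centralizer G y" if "y \<in> generate G S" for y
  proof (intro generate_subgroup_incl subgroup_centralizer)
    show "y \<in> carrier G" using that gen_carrier by blast
    show "S \<subseteq> centralizer G y"
    proof
      fix b
      assume b: "b \<in> S"
      then have "y \<otimes> b = b \<otimes> y"
        using gen_comm_S[OF b] that by (auto simp: centralizer_def)
      then show "b \<in> centralizer G y"
        using b S by (auto simp: centralizer_def)
    qed
  qed
  fix x y
  assume "x \<in> carrier (subgroup_generated G S)" "y \<in> carrier (subgroup_generated G S)"
  then have "x \<in> generate G S" "y \<in> generate G S"
    using S by (auto simp: carrier_subgroup_generated Int_absorb1)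
  then show "x \<otimes>\<^bsub>subgroup_generated G S\<^esub> y = y \<otimes>\<^bsub>subgroup_generated G S\<^esub> x"
    using gen_comm by (auto simp: centralizer_def)
qed simp

lemma (in comm_group) word_product_eq_finprod_powers:
  assumes S: "finite S" "S \<subseteq> carrier G" and xs: "set xs \<subseteq> S \<union> (\<lambda>s. inv s) ` S"
  shows "\<exists>k \<in> S \<rightarrow>\<^sub>E {- int (length xs)..int (length xs)}. foldr (\<otimes>) xs \<one> = (\<Otimes>s\<in>S. s [^] k s)"
  using xs
proof (induction xs)
  case Nil
  show ?case
    by (rule bexI[of _ "\<lambda>s\<in>S. 0"]) (simp_all add: finprod_one_eqI)
next
  case (Cons x xs)
  then obtain k where k: "k \<in> S \<rightarrow>\<^sub>E {- int (length xs)..int (length xs)}"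
    and prod: "foldr (\<otimes>) xs \<one> = (\<Otimes>s\<in>S. s [^] k s)"
    by auto
  obtain t and \<epsilon> :: int where t: "t \<in> S" and \<epsilon>: "\<epsilon> \<in> {1, -1}" and x: "x = t [^] \<epsilon>"
  proof -
    have "x \<in> S \<or> (\<exists>t\<in>S. x = inv t)" using Cons.prems by auto
    moreover have "t [^] (1::int) = t" "t [^] (-1::int) = inv t" if "t \<in> S" for t
      using that S(2) int_pow_neg[of t 1] by auto
    ultimately show thesis
      using that by (metis insertCI)
  qed
  define k' where "k' = k(t := k t + \<epsilon>)"
  have carr: "(\<lambda>s. s [^] k s) \<in> S \<rightarrow> carrier G" "(\<lambda>s. if s = t then s [^] \<epsilon> else \<one>) \<in> S \<rightarrow> carrier G"
    using S(2) by auto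
  have "(\<Otimes>s\<in>S. s [^] k' s) = (\<Otimes>s\<in>S. (if s = t then s [^] \<epsilon> else \<one>) \<otimes> s [^] k s)"
    using S(2) by (intro finprod_cong') (auto simp: k'_def int_pow_mult add.commute subset_iff)
  also have "\<dots> = t [^] \<epsilon> \<otimes> (\<Otimes>s\<in>S. s [^] k s)"
    using carr t S finprod_singleton_swap[OF t S(1), of "\<lambda>s. s [^] \<epsilon>"] by (auto simp: subset_iff)
  finally have "foldr (\<otimes>) (x # xs) \<one> = (\<Otimes>s\<in>S. s [^] k' s)"
    by (simp add: prod x)
  moreover have "k' \<in> S \<rightarrow>\<^sub>E {- int (length (x # xs))..int (length (x # xs))}"
    using k t \<epsilon> by (auto simp: k'_def PiE_iff extensional_def)
  ultimately show ?case by blast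
qed

lemma (in comm_group) polynomial_growth_finite_generators:
  assumes S: "finite S" "S \<subseteq> carrier G"
  shows "polynomial_growth G S"
  unfolding polynomial_growth_def
proof (intro exI allI impI conjI)
  fix r :: nat
  assume r: "r \<ge> 1"
  define P where "P = S \<rightarrow>\<^sub>E {- int r..int r}"
  have ball: "word_ball G S r \<subseteq> (\<lambda>k. \<Otimes>s\<in>S. s [^] k s) ` P"
  proof
    fix y
    assume "y \<in> word_ball G S r"
    then obtain xs where y: "y = foldr (\<otimes>) xs \<one>" and l: "length xs \<le> r"
      and xs: "set xs \<subseteq> S \<union> (\<lambda>s. inv s) ` S"
      unfolding word_ball_def by auto
    obtain k where "k \<in> S \<rightarrow>\<^sub>E {- int (length xs)..int (length xs)}" "y = (\<Otimes>s\<in>S. s [^] k s)"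
      using word_product_eq_finprod_powers[OF S xs] y by auto
    moreover have "S \<rightarrow>\<^sub>E {- int (length xs)..int (length xs)} \<subseteq> P"
      using l by (force simp: P_def PiE_iff)
    ultimately show "y \<in> (\<lambda>k. \<Otimes>s\<in>S. s [^] k s) ` P" by blast
  qed
  have fin: "finite P" using S(1) by (simp add: P_def finite_PiE)
  then show "finite (word_ball G S r)"
    using ball finite_surj by blast
  have "card (word_ball G S r) \<le> card P"
    using ball fin by (meson card_image_le card_mono finite_imageI le_trans)
  also have "\<dots> = (2 * r + 1) ^ card S"
  proof -
    have "card {- int r..int r} = 2 * r + 1" by simp
    then show ?thesis using S(1) by (simp add: P_def card_PiE)
  qed
  also have "\<dots> \<le> (3 * r) ^ card S"
    using r by (intro power_mono) auto
  finally have "card (word_ball G S r) \<le> 3 ^ card S * r ^ card S"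
    by (simp add: power_mult_distrib)
  then have "real (card (word_ball G S r)) \<le> real (3 ^ card S * r ^ card S)"
    by (rule of_nat_mono)
  then show "real (card (word_ball G S r)) \<le> 3 ^ card S * real r ^ card S"
    by simp
qed

definition shift_word :: "bword \<Rightarrow> bword" where
  "shift_word w = map (\<lambda>(i, e). (Suc i, e)) w"

definition inverse_word :: "bword \<Rightarrow> bword" where
  "inverse_word w = rev (map (\<lambda>(i, e). (i, \<not> e)) w)"

definition braid_word :: "nat \<Rightarrow> bword \<Rightarrow> bool" where
  "braid_word m w \<longleftrightarrow> (\<forall>x\<in>set w. 1 \<le> fst x \<and> fst x < m)"

lemma shift_word_simps [simp]:
  "shift_word [] = []"
  "shift_word ((i, e) # w) = (Suc i, e) # shift_word w"
  "shift_word (u @ v) = shift_word u @ shift_word v"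
  by (simp_all add: shift_word_def)

lemma inverse_word_inverse_word [simp]: "inverse_word (inverse_word w) = w"
  by (induction w) (auto simp: inverse_word_def rev_map)

lemma braid_word_append [simp]: "braid_word m (u @ v) \<longleftrightarrow> braid_word m u \<and> braid_word m v"
  by (auto simp: braid_word_def)

lemma braid_word_rev [simp]: "braid_word m (rev w) \<longleftrightarrow> braid_word m w"
  by (simp add: braid_word_def)

lemma braid_word_inverse_word [simp]: "braid_word m (inverse_word w) \<longleftrightarrow> braid_word m w"
  by (auto simp: braid_word_def inverse_word_def)

declare beq_trans [trans]

lemma beq_append: "beq u u' \<Longrightarrow> beq v v' \<Longrightarrow> beq (u @ v) (u' @ v')"
  using beq_ctx[of u u' "[]" v] beq_ctx[of v v' u' "[]"] beq_trans by simp

lemma beq_append_left: "beq v v' \<Longrightarrow> beq (u @ v) (u @ v')"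
  by (rule beq_append[OF beq_refl])

lemma beq_append_right: "beq u u' \<Longrightarrow> beq (u @ v) (u' @ v)"
  by (rule beq_append[OF _ beq_refl])

lemma beq_shift_word: "beq u v \<Longrightarrow> beq (shift_word u) (shift_word v)"
proof (induction rule: beq.induct)
  case (beq_ctx u v a b)
  then show ?case using beq.beq_ctx by simp
next
  case (beq_sym u v)
  show ?case by (rule beq.beq_sym[OF beq_sym.IH])
next
  case (beq_trans u v w)
  show ?case by (rule beq.beq_trans[OF beq_trans.IH])
qed (simp_all add: beq.beq_refl beq.beq_cancel beq.beq_braid beq.beq_far)

lemma beq_rev: "beq u v \<Longrightarrow> beq (rev u) (rev v)"
proof (induction rule: beq.induct)
  case (beq_ctx u v a b)
  then show ?case using beq.beq_ctx[of "rev u" "rev v" "rev b" "rev a"] by simp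
next
  case (beq_cancel i e)
  then show ?case using beq.beq_cancel[of i "\<not> e"] by simp
next
  case (beq_far i j)
  then show ?case using beq.beq_far[of i j] by (simp add: beq.beq_sym)
next
  case (beq_sym u v)
  show ?case by (rule beq.beq_sym[OF beq_sym.IH])
next
  case (beq_trans u v w)
  show ?case by (rule beq.beq_trans[OF beq_trans.IH])
qed (simp_all add: beq.beq_refl beq.beq_braid)

lemma beq_append_inverse_word: "beq (w @ inverse_word w) []"
proof (induction w)
  case Nil
  then show ?case by (simp add: inverse_word_def beq_refl)
next
  case (Cons x w)
  obtain i e where x: "x = (i, e)" by (cases x)
  have "beq ([x] @ (w @ inverse_word w) @ [(i, \<not> e)]) ([x] @ [] @ [(i, \<not> e)])"
    by (rule beq_ctx[OF Cons.IH])
  then show ?case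
    using beq_trans[OF _ beq_cancel[of i e]] by (simp add: inverse_word_def x)
qed

lemma beq_inverse_word_append: "beq (inverse_word w @ w) []"
  using beq_append_inverse_word[of "inverse_word w"] by simp

lemma bclass_eq_Collect: "bclass w = {v. beq w v}"
  by (auto simp: bclass_def brel_def)

lemma bclass_eq_iff: "bclass u = bclass v \<longleftrightarrow> beq u v"
proof
  assume "bclass u = bclass v"
  then show "beq u v"
    using beq_refl[of v] by (auto simp: bclass_eq_Collect)
next
  assume "beq u v"
  then have "beq u w \<longleftrightarrow> beq v w" for w
    using beq_sym beq_trans by blast
  then show "bclass u = bclass v"
    by (simp add: bclass_eq_Collect)
qed

lemma beq_some_bclass: "beq u (SOME x. x \<in> bclass u)"
proof -
  have "u \<in> bclass u" by (simp add: bclass_eq_Collect beq_refl)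
  then have "(SOME x. x \<in> bclass u) \<in> bclass u" by (rule someI)
  then show ?thesis by (simp add: bclass_eq_Collect)
qed

lemma bmult_bclass: "bmult (bclass u) (bclass v) = bclass (u @ v)"
  unfolding bmult_def bclass_eq_iff
  by (rule beq_sym, rule beq_append[OF beq_some_bclass beq_some_bclass])

lemma shift_bclass: "shift (bclass w) = bclass (shift_word w)"
  unfolding shift_def bclass_eq_iff shift_word_def[symmetric]
  by (rule beq_sym, rule beq_shift_word[OF beq_some_bclass])

lemma carrier_braid_group: "carrier (braid_group m) = {bclass w | w. braid_word m w}"
  by (simp add: braid_group_def braid_word_def)

lemma bclass_in_carrier_braid_group: "braid_word m w \<Longrightarrow> bclass w \<in> carrier (braid_group m)"
  by (auto simp: carrier_braid_group)

lemma mult_braid_group [simp]: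
  "bclass u \<otimes>\<^bsub>braid_group m\<^esub> bclass v = bclass (u @ v)"
  by (simp add: braid_group_def B_inf_def bmult_bclass)

lemma one_braid_group: "\<one>\<^bsub>braid_group m\<^esub> = bclass []"
  by (simp add: braid_group_def B_inf_def)

lemma group_braid_group: "group (braid_group m)"
proof (rule groupI)
  fix x y
  assume "x \<in> carrier (braid_group m)" "y \<in> carrier (braid_group m)"
  then show "x \<otimes>\<^bsub>braid_group m\<^esub> y \<in> carrier (braid_group m)"
    by (auto simp: carrier_braid_group bclass_in_carrier_braid_group)
next
  fix x y z
  assume "x \<in> carrier (braid_group m)" "y \<in> carrier (braid_group m)" "z \<in> carrier (braid_group m)"
  then show "x \<otimes>\<^bsub>braid_group m\<^esub> y \<otimes>\<^bsub>braid_group m\<^esub> z =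
             x \<otimes>\<^bsub>braid_group m\<^esub> (y \<otimes>\<^bsub>braid_group m\<^esub> z)"
    by (auto simp: carrier_braid_group)
next
  fix x
  assume "x \<in> carrier (braid_group m)"
  then obtain w where w: "x = bclass w" "braid_word m w"
    by (auto simp: carrier_braid_group)
  show "\<one>\<^bsub>braid_group m\<^esub> \<otimes>\<^bsub>braid_group m\<^esub> x = x"
    by (simp add: w one_braid_group)
  have "bclass (inverse_word w) \<otimes>\<^bsub>braid_group m\<^esub> x = \<one>\<^bsub>braid_group m\<^esub>"
    by (simp add: w one_braid_group bclass_eq_iff beq_inverse_word_append)
  with w show "\<exists>y\<in>carrier (braid_group m). y \<otimes>\<^bsub>braid_group m\<^esub> x = \<one>\<^bsub>braid_group m\<^esub>"
    by (meson bclass_in_carrier_braid_group braid_word_inverse_word)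
qed (auto simp: one_braid_group carrier_braid_group braid_word_def)

lemma inv_braid_group:
  assumes "braid_word m w"
  shows "inv\<^bsub>braid_group m\<^esub> (bclass w) = bclass (inverse_word w)"
  using assms
  by (intro group.inv_equality[OF group_braid_group])
     (simp_all add: one_braid_group bclass_eq_iff beq_inverse_word_append
       bclass_in_carrier_braid_group)

lemma beq_move_inverse_letter:
  assumes "beq (u @ [(i, True)]) ((j, True) # u)"
  shows "beq (u @ [(i, False)]) ((j, False) # u)"
proof -
  have "beq ((j, False) # u) ([(j, False)] @ (u @ [(i, True)]) @ [(i, False)])"
    using beq_ctx[OF beq_cancel[of i True], of "(j, False) # u" "[]"] by (simp add: beq_sym)
  also have "beq \<dots> ([(j, False)] @ ((j, True) # u) @ [(i, False)])"
    by (rule beq_ctx[OF assms])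
  also have "beq \<dots> (u @ [(i, False)])"
    using beq_ctx[OF beq_cancel[of j False], of "[]" "u @ [(i, False)]"] by simp
  finally show ?thesis by (rule beq_sym)
qed

lemma beq_conjugate_word:
  assumes "\<And>i e. (i, e) \<in> set v \<Longrightarrow> beq (u @ [(i, True)]) ((f i, True) # u)"
  shows "beq (u @ v) (map (\<lambda>(i, e). (f i, e)) v @ u)"
  using assms
proof (induction v)
  case Nil
  then show ?case by (simp add: beq_refl)
next
  case (Cons x v)
  obtain i e where x: "x = (i, e)" by (cases x)
  have "beq (u @ [(i, e)]) ((f i, e) # u)"
    using Cons.prems[of i e] beq_move_inverse_letter[of u i "f i"] x by (cases e) auto
  from beq_append_right[OF this, of v] have "beq (u @ x # v) ([(f i, e)] @ u @ v)"
    by (simp add: x)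
  also have "beq \<dots> ([(f i, e)] @ map (\<lambda>(i, e). (f i, e)) v @ u)"
    by (rule beq_append_left, rule Cons.IH) (use Cons.prems in auto)
  finally show ?case by (simp add: x)
qed

lemma beq_commute_word:
  assumes "\<And>i e. (i, e) \<in> set v \<Longrightarrow> beq (u @ [(i, True)]) ((i, True) # u)"
  shows "beq (u @ v) (v @ u)"
  using beq_conjugate_word[of v u "\<lambda>i. i", OF assms] by (simp add: case_prod_beta')

lemma beq_commute_far_letter:
  assumes "\<And>x. x \<in> set w \<Longrightarrow> Suc (fst x) < i \<or> Suc i < fst x"
  shows "beq (w @ [(i, True)]) ((i, True) # w)"
proof -
  have "beq ([(i, True)] @ w) (w @ [(i, True)])"
    by (rule beq_commute_word) (use assms beq_far in fastforce)
  then show ?thesis by (simp add: beq_sym)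
qed

text \<open>The words are indexed by their largest generator: they spell delta (Suc m) and
  Delta (Suc m).\<close>

definition delta_word :: "nat \<Rightarrow> bword" where
  "delta_word m = map (\<lambda>i. (i, True)) (rev [1..<Suc m])"

definition Delta_word :: "nat \<Rightarrow> bword" where
  "Delta_word m = concat (map (\<lambda>k. map (\<lambda>i. (i, True)) (rev [k..<Suc m])) [1..<Suc m])"

lemma delta_word_0 [simp]: "delta_word 0 = []"
  by (simp add: delta_word_def)

lemma delta_word_Suc: "delta_word (Suc m) = (Suc m, True) # delta_word m"
  by (simp add: delta_word_def)

lemma delta_word_letters: "x \<in> set (delta_word m) \<Longrightarrow> snd x \<and> 1 \<le> fst x \<and> fst x \<le> m"
  by (auto simp: delta_word_def)

lemma shift_delta_word: "shift_word (delta_word m) @ [(1, True)] = delta_word (Suc m)"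
  by (induction m) (auto simp: delta_word_Suc)

lemma Delta_word_letters: "x \<in> set (Delta_word m) \<Longrightarrow> snd x \<and> 1 \<le> fst x \<and> fst x \<le> m"
  by (auto simp: Delta_word_def)

lemma Delta_word_Suc: "Delta_word (Suc m) = delta_word (Suc m) @ shift_word (Delta_word m)"
proof -
  have shift_row: "map (\<lambda>i. (i, True)) (rev [Suc k..<Suc (Suc m)])
      = shift_word (map (\<lambda>i. (i, True)) (rev [k..<Suc m]))" for k
    unfolding map_Suc_upt[symmetric] by (simp add: shift_word_def rev_map del: upt_Suc)
  have "[1..<Suc (Suc m)] = 1 # map Suc [1..<Suc m]"
    by (simp only: upt_conv_Cons[of 1 "Suc (Suc m)"] map_Suc_upt)
  then have "Delta_word (Suc m) = delta_word (Suc m) @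
      concat (map (\<lambda>k. map (\<lambda>i. (i, True)) (rev [Suc k..<Suc (Suc m)])) [1..<Suc m])"
    by (simp add: Delta_word_def delta_word_def comp_def del: upt_Suc)
  also have "\<dots> = delta_word (Suc m) @ shift_word (Delta_word m)"
    by (simp add: shift_row Delta_word_def shift_word_def map_concat comp_def del: upt_Suc)
  finally show ?thesis .
qed

lemma beq_delta_word_letter:
  "2 \<le> i \<Longrightarrow> i \<le> m \<Longrightarrow> beq (delta_word m @ [(i, True)]) ((i - 1, True) # delta_word m)"
proof (induction m arbitrary: i)
  case 0
  then show ?case by simp
next
  case (Suc m)
  show ?case
  proof (cases "i \<le> m")
    case True
    have "beq ([(Suc m, True)] @ delta_word m @ [(i, True)]) ([(Suc m, True)] @ (i - 1, True) # delta_word m)"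
      by (rule beq_append_left, rule Suc.IH) (use Suc.prems True in auto)
    also have "beq \<dots> ([(Suc m, True), (i - 1, True)] @ delta_word m)"
      by (simp add: beq_refl)
    also have "beq \<dots> ([(i - 1, True), (Suc m, True)] @ delta_word m)"
      by (rule beq_append_right, rule beq_far) (use Suc.prems True in auto)
    finally show ?thesis by (simp add: delta_word_Suc)
  next
    case False
    then obtain k where i: "i = Suc (Suc k)" and m: "m = Suc k"
      using Suc.prems by (cases m) auto
    have "beq ([(Suc (Suc k), True), (Suc k, True)] @ delta_word k @ [(Suc (Suc k), True)])
              ([(Suc (Suc k), True), (Suc k, True)] @ (Suc (Suc k), True) # delta_word k)"
      by (rule beq_append_left, rule beq_commute_far_letter) (auto dest: delta_word_letters)
    also have "beq \<dots> ([(Suc k, True), (Suc (Suc k), True), (Suc k, True)] @ delta_word k)"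
      using beq_append_right[OF beq_braid[of "Suc (Suc k)" "Suc k"]] by simp
    finally show ?thesis by (simp add: delta_word_Suc i m)
  qed
qed

lemma beq_letter_rev_delta_word:
  "2 \<le> i \<Longrightarrow> i \<le> m \<Longrightarrow> beq ((i, True) # rev (delta_word m)) (rev (delta_word m) @ [(i - 1, True)])"
  using beq_rev[OF beq_delta_word_letter[of i m]] by (simp add: beq_sym)

lemma beq_delta_word_shift_delta_word:
  "beq (delta_word (Suc m) @ shift_word (delta_word m)) (delta_word m @ delta_word (Suc m))"
proof -
  have "beq (delta_word (Suc m) @ shift_word (delta_word m))
      (map (\<lambda>(i, e). (i - 1, e)) (shift_word (delta_word m)) @ delta_word (Suc m))"
  proof (rule beq_conjugate_word)
    fix i e
    assume "(i, e) \<in> set (shift_word (delta_word m))"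
    then have "2 \<le> i" "i \<le> Suc m"
      by (auto simp: shift_word_def dest: delta_word_letters)
    then show "beq (delta_word (Suc m) @ [(i, True)]) ((i - 1, True) # delta_word (Suc m))"
      by (rule beq_delta_word_letter)
  qed
  moreover have "map (\<lambda>(i, e). (i - 1, e)) (shift_word w) = w" for w
    by (induction w) (auto simp: shift_word_def)
  ultimately show ?thesis by simp
qed

lemma beq_Delta_word_first_letter:
  "beq (Delta_word (Suc m) @ [(1, True)]) ((Suc m, True) # Delta_word (Suc m))"
proof (cases m)
  case 0
  then show ?thesis by (simp add: Delta_word_Suc delta_word_Suc Delta_word_def beq_refl)
next
  case (Suc k)
  define D where "D = shift_word (shift_word (Delta_word k))"
  have Delta: "Delta_word (Suc m) = delta_word (Suc m) @ shift_word (delta_word m) @ D"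
    by (simp add: Suc D_def Delta_word_Suc)
  have "beq (D @ [(1, True)]) ((1, True) # D)"
    by (rule beq_commute_far_letter) (auto simp: D_def shift_word_def dest: Delta_word_letters)
  then have "beq (Delta_word (Suc m) @ [(1, True)]) (delta_word (Suc m) @ delta_word (Suc m) @ D)"
    using beq_append_left[of "D @ [(1, True)]" _ "delta_word (Suc m) @ shift_word (delta_word m)"]
    by (simp add: Delta flip: shift_delta_word)
  also have "beq \<dots> ([(Suc m, True)] @ (delta_word m @ delta_word (Suc m)) @ D)"
    by (simp add: delta_word_Suc beq_refl)
  also have "beq \<dots> ([(Suc m, True)] @ (delta_word (Suc m) @ shift_word (delta_word m)) @ D)"
    by (rule beq_ctx, rule beq_sym, rule beq_delta_word_shift_delta_word)
  finally show ?thesis by (simp add: Delta)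
qed

lemma beq_Delta_word_letter:
  "1 \<le> i \<Longrightarrow> i \<le> m \<Longrightarrow> beq (Delta_word m @ [(i, True)]) ((Suc m - i, True) # Delta_word m)"
proof (induction m arbitrary: i)
  case 0
  then show ?case by simp
next
  case (Suc m)
  show ?case
  proof (cases "i = 1")
    case True
    then show ?thesis using beq_Delta_word_first_letter[of m] by simp
  next
    case False
    then have i: "2 \<le> i" "i \<le> Suc m" using Suc.prems by auto
    have "beq (shift_word (Delta_word m @ [(i - 1, True)])) (shift_word ((Suc m - (i - 1), True) # Delta_word m))"
      by (rule beq_shift_word, rule Suc.IH) (use i in auto)
    then have "beq (shift_word (Delta_word m) @ [(i, True)]) ((Suc (Suc m) - i + 1, True) # shift_word (Delta_word m))"
      using i by (simp add: Suc_diff_le)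
    then have "beq (delta_word (Suc m) @ shift_word (Delta_word m) @ [(i, True)])
                   ((delta_word (Suc m) @ [(Suc (Suc m) - i + 1, True)]) @ shift_word (Delta_word m))"
      using beq_append_left by fastforce
    also have "beq \<dots> (((Suc (Suc m) - i, True) # delta_word (Suc m)) @ shift_word (Delta_word m))"
      by (rule beq_append_right) (use beq_delta_word_letter[of "Suc (Suc m) - i + 1" "Suc m"] i in auto)
    finally show ?thesis by (simp add: Delta_word_Suc)
  qed
qed

lemma beq_Delta_square_commute:
  assumes "\<And>x. x \<in> set v \<Longrightarrow> 1 \<le> fst x \<and> fst x \<le> m"
  shows "beq ((Delta_word m @ Delta_word m) @ v) (v @ Delta_word m @ Delta_word m)"
proof (rule beq_commute_word)
  fix i e
  assume "(i, e) \<in> set v"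
  then have i: "1 \<le> i" "i \<le> m" and j: "1 \<le> Suc m - i" "Suc m - i \<le> m"
    using assms by force+
  have "beq (Delta_word m @ Delta_word m @ [(i, True)]) ((Delta_word m @ [(Suc m - i, True)]) @ Delta_word m)"
    using beq_append_left[OF beq_Delta_word_letter[OF i]] by simp
  also have "beq \<dots> ((Suc m - (Suc m - i), True) # Delta_word m @ Delta_word m)"
    using beq_append_right[OF beq_Delta_word_letter[OF j]] by simp
  finally show "beq ((Delta_word m @ Delta_word m) @ [(i, True)]) ((i, True) # Delta_word m @ Delta_word m)"
    using i by simp
qed

lemma beq_rev_delta_word_delta_word_commute:
  assumes "\<And>x. x \<in> set v \<Longrightarrow> 2 \<le> fst x \<and> fst x \<le> m"
  shows "beq ((rev (delta_word m) @ delta_word m) @ v) (v @ rev (delta_word m) @ delta_word m)"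
proof (rule beq_commute_word)
  fix i e
  assume "(i, e) \<in> set v"
  then have i: "2 \<le> i" "i \<le> m" using assms by force+
  have "beq (rev (delta_word m) @ delta_word m @ [(i, True)]) ((rev (delta_word m) @ [(i - 1, True)]) @ delta_word m)"
    using beq_append_left[OF beq_delta_word_letter[OF i]] by simp
  also have "beq \<dots> ((i, True) # rev (delta_word m) @ delta_word m)"
    using beq_append_right[OF beq_sym[OF beq_letter_rev_delta_word[OF i]]] by simp
  finally show "beq ((rev (delta_word m) @ delta_word m) @ [(i, True)]) ((i, True) # rev (delta_word m) @ delta_word m)"
    by simp
qed

lemma braid_word_delta_word: "braid_word (Suc m) (delta_word m)"
  by (auto simp: braid_word_def dest: delta_word_letters)

lemma braid_word_Delta_word: "braid_word (Suc m) (Delta_word m)"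
  by (auto simp: braid_word_def dest: Delta_word_letters)

lemma Delta_eq_bclass: "Delta (Suc m) = bclass (Delta_word m)"
  by (simp add: Delta_def Delta_word_def)

lemma delta_eq_bclass: "delta (Suc m) = bclass (delta_word m)"
  by (simp add: delta_def delta_word_def)

lemma Delta_square_commute:
  assumes "g \<in> carrier (braid_group (Suc m))"
  shows "Delta (Suc m) \<otimes>\<^bsub>braid_group (Suc m)\<^esub> Delta (Suc m) \<otimes>\<^bsub>braid_group (Suc m)\<^esub> g
       = g \<otimes>\<^bsub>braid_group (Suc m)\<^esub> (Delta (Suc m) \<otimes>\<^bsub>braid_group (Suc m)\<^esub> Delta (Suc m))"
proof -
  obtain w where g: "g = bclass w" and w: "braid_word (Suc m) w"
    using assms by (auto simp: carrier_braid_group)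
  have "beq ((Delta_word m @ Delta_word m) @ w) (w @ Delta_word m @ Delta_word m)"
    by (rule beq_Delta_square_commute) (use w in \<open>auto simp: braid_word_def\<close>)
  then show ?thesis
    by (simp add: g Delta_eq_bclass bclass_eq_iff)
qed

lemma rev_delta_word_append_delta_word:
  "1 \<le> m \<Longrightarrow> rev (delta_word m) @ delta_word m
     = map (\<lambda>i. (i, True)) [1..<m] @ [(m, True), (m, True)] @ map (\<lambda>i. (i, True)) (rev [1..<m])"
  by (cases m) (simp_all add: delta_word_def rev_map)

lemma shift_mult_sigma_mult_inv_delta:
  assumes "q \<in> carrier (braid_group m)" and "1 \<le> m"
  shows "shift q \<otimes>\<^bsub>braid_group (Suc m)\<^esub> sigma 1 \<otimes>\<^bsub>braid_group (Suc m)\<^esub>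
           inv\<^bsub>braid_group (Suc m)\<^esub> (delta (Suc m))
       = shift q \<otimes>\<^bsub>braid_group (Suc m)\<^esub> bclass (map (\<lambda>i. (i, False)) [2..<Suc m])"
proof -
  obtain w where q: "q = bclass w"
    using assms(1) by (auto simp: carrier_braid_group)
  have "inverse_word (delta_word m) = (1, False) # map (\<lambda>i. (i, False)) [2..<Suc m]"
    using assms(2)
    by (simp add: inverse_word_def delta_word_def rev_map upt_conv_Cons numeral_2_eq_2 del: upt_Suc)
  then show ?thesis
    using braid_word_delta_word
      beq_ctx[OF beq_cancel[of 1 True], of "shift_word w" "map (\<lambda>i. (i, False)) [2..<Suc m]"]
    by (simp add: q shift_bclass sigma_def delta_eq_bclass inv_braid_group bclass_eq_iff)
qed

theorem proposition3:
  fixes n :: nat and p :: "bword set"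
  assumes "n \<ge> 2" and "p \<in> carrier (braid_group n)"
  defines "B \<equiv> braid_group (n + 1)"
  defines "C \<equiv> centralizer B (shift p \<otimes>\<^bsub>B\<^esub> sigma 1 \<otimes>\<^bsub>B\<^esub> inv\<^bsub>B\<^esub> (delta (n + 1)))"
  defines "c1 \<equiv> Delta (n + 1) \<otimes>\<^bsub>B\<^esub> Delta (n + 1)"
  defines "c2 \<equiv> shift p \<otimes>\<^bsub>B\<^esub> bclass (map (\<lambda>i. (i, False)) [2..<n + 1])"
  defines "c3 \<equiv> bclass (map (\<lambda>i. (i, True)) [1..<n] @ [(n, True), (n, True)]
                        @ map (\<lambda>i. (i, True)) (rev [1..<n]))"
  shows "c1 \<in> C \<and> c2 \<in> C \<and> c3 \<in> C
         \<and> comm_group (subgroup_generated B {c1, c2, c3})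
         \<and> polynomial_growth (subgroup_generated B {c1, c2, c3}) {c1, c2, c3}"
proof -
  interpret B: group B
    unfolding B_def by (rule group_braid_group)
  obtain w where p: "p = bclass w" and w: "braid_word n w"
    using assms(2) by (auto simp: carrier_braid_group)
  define v where "v = shift_word w @ map (\<lambda>i. (i, False)) [2..<Suc n]"
  have v_letters: "\<And>x. x \<in> set v \<Longrightarrow> 2 \<le> fst x \<and> fst x \<le> n"
    using w by (auto simp: v_def braid_word_def shift_word_def)
  then have "braid_word (Suc n) v"
    by (force simp: braid_word_def)
  moreover have c2: "c2 = bclass v"
    by (simp add: c2_def B_def p shift_bclass v_def)
  moreover have c3: "c3 = bclass (rev (delta_word n) @ delta_word n)"
    using assms(1) by (simp add: c3_def rev_delta_word_append_delta_word)
  ultimately have carrier: "c1 \<in> carrier B" "c2 \<in> carrier B" "c3 \<in> carrier B"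
    by (auto simp: c1_def B_def Delta_eq_bclass braid_word_delta_word braid_word_Delta_word
        intro!: bclass_in_carrier_braid_group)
  have "shift p \<otimes>\<^bsub>B\<^esub> sigma 1 \<otimes>\<^bsub>B\<^esub> inv\<^bsub>B\<^esub> (delta (n + 1)) = c2"
    using shift_mult_sigma_mult_inv_delta[OF assms(2)] assms(1) by (simp add: B_def c2_def)
  moreover have comm: "c1 \<otimes>\<^bsub>B\<^esub> c2 = c2 \<otimes>\<^bsub>B\<^esub> c1" "c1 \<otimes>\<^bsub>B\<^esub> c3 = c3 \<otimes>\<^bsub>B\<^esub> c1"
      "c3 \<otimes>\<^bsub>B\<^esub> c2 = c2 \<otimes>\<^bsub>B\<^esub> c3"
    using carrier Delta_square_commute beq_rev_delta_word_delta_word_commute[of v, OF v_letters]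
    by (simp_all add: c1_def B_def c2 c3 bclass_eq_iff)
  ultimately have "c1 \<in> C \<and> c2 \<in> C \<and> c3 \<in> C"
    using carrier by (auto simp: C_def centralizer_def)
  moreover have abelian: "comm_group (subgroup_generated B {c1, c2, c3})"
    using carrier comm by (intro B.comm_group_subgroup_generated) auto
  moreover have "{c1, c2, c3} \<subseteq> carrier (subgroup_generated B {c1, c2, c3})"
    using carrier by (auto simp: carrier_subgroup_generated intro: generate.incl)
  then have "polynomial_growth (subgroup_generated B {c1, c2, c3}) {c1, c2, c3}"
    by (intro comm_group.polynomial_growth_finite_generators[OF abelian]) auto
  ultimately show ?thesis by blast
qed

end
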